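(* Let $\Delta x>0$, grid $x_j=x_1+(j-1)\Delta x$, $M_-,M_+\in\mathbb{Z}$ with $M:=M_-+M_+\ge0$, and let $f,h$ be real functions of class $C^{N_{TJ}+1}$ forming a reconstruction pair, $f(x)=\frac{1}{\Delta x}\int_{x-\frac12\Delta x}^{x+\frac12\Delta x}h(\zeta)\,d\zeta$, on an interval containing the relevant points. Let $p_f$ be the polynomial of degree $\le M$ interpolating $f$ at $x_{i-M_-},\dots,x_{i+M_+}$ and $p_h$ the polynomial of degree $\le M$ with $p_f(x)=\frac1{\Delta x}\int_{x-\frac12\Delta x}^{x+\frac12\Delta x}p_h$ for all $x$. Let $x_{i+\frac12}=x_i+\tfrac12\Delta x$, $h_{i+\frac12}^{(m)}=h^{(m)}(x_{i+\frac12})$, $f_{i+\ell}=f(x_{i+\ell})$. Then, for $N_{TJ}\ge M+1$, $$\hat h_{i+\frac12}:=p_h(x_{i+\frac12})=\sum_{\ell=-M_-}^{M_+}a_{M_-,M_+,\ell}\,f_{i+\ell}=h_{i+\frac12}+\sum_{s=M+1}^{N_{TJ}}\Lambda_{M_-,M_+,s}\Delta x^s h^{(s)}_{i+\frac12}+O(\Delta x^{N_{TJ}+1}),$$ and the error term is $O(\Delta x^{M+1})$, where $$\Lambda_{M_-,M_+,s}=\sum_{\ell=0}^{s-M-1}\frac{(-1)^\ell}{(\ell+1)!}\mu_{h,M_-,M_+,s-\ell}(\tfrac12),\qquad a_{M_-,M_+,\ell}=\sum_{m=0}^{M}\left(\sum_{k=0}^{\lfloor (M-m)/2\rfloor}\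frac{\tau_{2k}(m+2k)!}{m!}(V_{M_-,M_+}^{-1})_{m+2k+1,\ell+M_-+1}\right)2^{-m}.$$
   Context: $O(\cdot)$ refers to $\Delta x\to0^+$. $V_{M_-,M_+}$ is the Vandermonde matrix with entries $(i-1-M_-)^{j-1}$, $1\le i,j\le M+1$ (with $0^0=1$); $\nu_{M_-,M_+,m,k}:=\sum_{\ell=-M_-}^{M_+}(V_{M_-,M_+}^{-1})_{m+1,\ell+M_-+1}\ell^k$; $\tau_0=1$, $\tau_{2k}=\sum_{s=0}^{k-1}\frac{-\tau_{2s}}{2^{2k-2s}(2k-2s+1)!}$ for $k>0$; $\mu_{h,M_-,M_+,s}(\xi)=\sum_{k=0}^{\lfloor s/2\rfloor}\frac{-\tau_{2k}}{(s-2k)!}\xi^{s-2k}+\sum_{m=0}^{M}\Big(\sum_{k=0}^{\lfloor (M-m)/2\rfloor}\tau_{2k}\nu_{M_-,M_+,m+2k,s}\frac{(m+2k)!}{s!\,m!}\Big)\xi^m$. *)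

theory Defs
  imports "HOL-Analysis.Analysis" "HOL-Library.Landau_Symbols"
    "Jordan_Normal_Form.Gauss_Jordan_Elimination"
begin

definition Mdeg :: "int \<Rightarrow> int \<Rightarrow> nat" where
  "Mdeg Mm Mp = nat (Mm + Mp)"

(* Vandermonde matrix V_{M_-,M_+}, 0-based: entry (i,j) = (i - M_-)^j, 0^0 = 1 *)
definition vander :: "int \<Rightarrow> int \<Rightarrow> real mat" where
  "vander Mm Mp = mat (Mdeg Mm Mp + 1) (Mdeg Mm Mp + 1)
      (\<lambda>(i, j). (real_of_int (int i - Mm)) ^ j)"

(* its inverse (the Vandermonde matrix has distinct nodes, hence is invertible) *)
definition vander_inv :: "int \<Rightarrow> int \<Rightarrow> real mat" where
  "vander_inv Mm Mp = the (mat_inverse (vander Mm Mp))"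

(* 0-based access: Vinv_{m+1, l+M_-+1} in the paper = vinv Mm Mp m l *)
definition vinv :: "int \<Rightarrow> int \<Rightarrow> nat \<Rightarrow> int \<Rightarrow> real" where
  "vinv Mm Mp m l = vander_inv Mm Mp $$ (m, nat (l + Mm))"

definition nu :: "int \<Rightarrow> int \<Rightarrow> nat \<Rightarrow> nat \<Rightarrow> real" where
  "nu Mm Mp m k = (\<Sum>l = -Mm..Mp. vinv Mm Mp m l * (real_of_int l) ^ k)"

(* tau k = \<tau>_{2k} *)
fun tau :: "nat \<Rightarrow> real" where
  "tau 0 = 1"
| "tau (Suc k) = (\<Sum>s<Suc k. - tau s /
      (2 ^ (2 * Suc k - 2 * s) * fact (2 * Suc k - 2 * s + 1)))"

definition mu :: "int \<Rightarrow> int \<Rightarrow> nat \<Rightarrow> real \<Rightarrow> real" where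
  "mu Mm Mp s \<xi> =
     (\<Sum>k = 0..s div 2. - tau k / fact (s - 2 * k) * \<xi> ^ (s - 2 * k))
   + (\<Sum>m = 0..Mdeg Mm Mp.
        (\<Sum>k = 0..(Mdeg Mm Mp - m) div 2.
           tau k * nu Mm Mp (m + 2 * k) s * fact (m + 2 * k) / (fact s * fact m)) * \<xi> ^ m)"

definition Lambda :: "int \<Rightarrow> int \<Rightarrow> nat \<Rightarrow> real" where
  "Lambda Mm Mp s = (\<Sum>l = 0..s - Mdeg Mm Mp - 1.
       (-1) ^ l / fact (l + 1) * mu Mm Mp (s - l) (1 / 2))"

definition acoef :: "int \<Rightarrow> int \<Rightarrow> int \<Rightarrow> real" where
  "acoef Mm Mp l = (\<Sum>m = 0..Mdeg Mm Mp.
      (\<Sum>k = 0..(Mdeg Mm Mp - m) div 2.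
         tau k * fact (m + 2 * k) / fact m * vinv Mm Mp (m + 2 * k) l) * (1 / 2) ^ m)"

definition cell_avg :: "real \<Rightarrow> (real \<Rightarrow> real) \<Rightarrow> real \<Rightarrow> real" where
  "cell_avg dx h x = (1 / dx) * integral {x - dx / 2 .. x + dx / 2} h"

end

theory Submission
  imports Defs "HOL-Computational_Algebra.Formal_Power_Series" "Jordan_Normal_Form.Determinant"
begin

text \<open>
  Let T(x) = (x/2) / sinh (x/2) = sum_k tau_2k x^2k. The weights a_l are built from the inverse
  Vandermonde matrix so that, for j <= M, their moments sum_l a_l l^j are j! times the j-th Taylor
  coefficient of T(x) e^(x/2). On the cell averages of (x - c)^s over the stencil the weights
  produce dx^s s! times the s-th coefficient of (1 - e^-x)/x * sum_j (sum_l a_l l^j) x^j / j!.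
  Since (1 - e^-x)/x * T(x) e^(x/2) = 1, that coefficient is 1 for s = 0 and 0 for 0 < s <= M,
  so the reconstruction is exact on polynomials of degree <= M (which identifies p_h(x_(i+1/2))
  with the stencil), and for s > M it is Lambda_s. Feeding the order-N Taylor polynomial of h at
  c = x_(i+1/2) through the stencil gives the expansion; the Taylor remainder contributes
  O(dx^(N+1)). The stencil nodes c - dx/2 + l dx are the grid points x_(i+l).
\<close>

section \<open>Generating functions\<close>

lemma sum_even_indices:
  "(\<Sum>i=0..(n::nat). if even i then g (i div 2) else (0::'a::comm_monoid_add)) = (\<Sum>k=0..n div 2. g k)"
proof (induction n)
  case (Suc n)
  show ?case
  proof (cases "even (Suc n)")
    case True
    then have "Suc n div 2 = Suc (n div 2)" by presburger
    then show ?thesis using Suc True by simp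
  next
    case False
    then have "Suc n div 2 = n div 2" by presburger
    then show ?thesis using Suc False by simp
  qed
qed simp

definition tau_fps :: "real fps" where
  "tau_fps = Abs_fps (\<lambda>n. if even n then tau (n div 2) else 0)"

definition two_sinh_half_div_X :: "real fps" where
  "two_sinh_half_div_X = Abs_fps (\<lambda>n. if even n then 1 / (2 ^ n * fact (n + 1)) else 0)"

definition one_minus_exp_div_X :: "real fps" where
  "one_minus_exp_div_X = Abs_fps (\<lambda>n. (-1) ^ n / fact (n + 1))"

lemma tau_fps_mult_two_sinh_half_div_X: "tau_fps * two_sinh_half_div_X = 1"
proof (rule fps_ext)
  fix n
  have conv: "fps_nth (tau_fps * two_sinh_half_div_X) n
      = (\<Sum>i=0..n. if even i then tau (i div 2) / (2 ^ (n - 2 * (i div 2)) * fact (n - 2 * (i div 2) + 1))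
                   else 0)" if "even n"
    unfolding fps_mult_nth
    by (rule sum.cong) (use that in \<open>auto simp: tau_fps_def two_sinh_half_div_X_def elim!: evenE\<close>)
  show "fps_nth (tau_fps * two_sinh_half_div_X) n = fps_nth 1 n"
  proof (cases "even n")
    case False
    then show ?thesis
      by (auto simp: fps_mult_nth tau_fps_def two_sinh_half_div_X_def odd_pos intro!: sum.neutral)
  next
    case True
    then obtain k where n: "n = 2 * k" by blast
    show ?thesis
    proof (cases k)
      case (Suc k')
      \<comment> \<open>the recursion defining \<open>tau (Suc k')\<close> says exactly that this coefficient vanishes\<close>
      have "fps_nth (tau_fps * two_sinh_half_div_X) n
          = (\<Sum>j=0..k. tau j / (2 ^ (n - 2 * j) * fact (n - 2 * j + 1)))"
        unfolding conv[OF True] by (subst sum_even_indices) (simp add: n)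
      also have "\<dots> = tau (Suc k')
          + (\<Sum>j<Suc k'. tau j / (2 ^ (2 * Suc k' - 2 * j) * fact (2 * Suc k' - 2 * j + 1)))"
        using Suc n by (simp add: atLeast0AtMost lessThan_Suc_atMost[symmetric] sum.lessThan_Suc)
      also have "\<dots> = 0"
        by (simp only: tau.simps(2) sum.distrib[symmetric]) simp
      finally show ?thesis using Suc n by simp
    qed (simp add: n fps_mult_nth tau_fps_def two_sinh_half_div_X_def)
  qed
qed

lemma fps_X_mult_two_sinh_half_div_X: "fps_X * two_sinh_half_div_X = fps_exp (1/2) - fps_exp (-1/2)"
proof (rule fps_ext)
  fix n
  show "fps_nth (fps_X * two_sinh_half_div_X) n = fps_nth (fps_exp (1/2) - fps_exp (-1/2)) n"
  proof (cases n)
    case (Suc m)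
    have "fps_nth (fps_exp (1/2) - fps_exp (-1/2)) n = ((1/2) ^ Suc m - (-1/2::real) ^ Suc m) / fact (Suc m)"
      using Suc by (simp only: fps_sub_nth fps_exp_nth of_nat_fact diff_divide_distrib)
    also have "\<dots> = (if even m then 1 / (2 ^ m * fact (Suc m)) else 0)"
      by (cases "even m") (simp_all add: power_minus_odd power_minus_even power_divide)
    finally show ?thesis
      using Suc by (simp add: fps_X_mult_nth two_sinh_half_div_X_def)
  qed (simp add: fps_X_mult_nth)
qed

lemma fps_X_mult_one_minus_exp_div_X: "fps_X * one_minus_exp_div_X = 1 - fps_exp (-1)"
proof (rule fps_ext)
  fix n
  show "fps_nth (fps_X * one_minus_exp_div_X) n = fps_nth (1 - fps_exp (-1)) n"
    by (cases n) (simp_all add: fps_X_mult_nth one_minus_exp_div_X_def fps_exp_def)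
qed

lemma fps_nth_tau_exp:
  "fps_nth (tau_fps * fps_exp (1/2)) r = (\<Sum>k=0..r div 2. tau k * (1/2) ^ (r - 2 * k) / fact (r - 2 * k))"
proof -
  have "fps_nth (tau_fps * fps_exp (1/2)) r
      = (\<Sum>i=0..r. if even i then tau (i div 2) * (1/2) ^ (r - 2 * (i div 2)) / fact (r - 2 * (i div 2)) else 0)"
    unfolding fps_mult_nth by (rule sum.cong) (auto simp: tau_fps_def fps_exp_def elim!: evenE)
  also have "\<dots> = (\<Sum>k=0..r div 2. tau k * (1/2) ^ (r - 2 * k) / fact (r - 2 * k))"
    by (rule sum_even_indices)
  finally show ?thesis .
qed

lemma one_minus_exp_div_X_mult_tau_exp: "one_minus_exp_div_X * (tau_fps * fps_exp (1/2)) = 1"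
proof -
  have "fps_X * (one_minus_exp_div_X * (tau_fps * fps_exp (1/2)))
      = (1 - fps_exp (-1)) * fps_exp (1/2) * tau_fps"
    by (simp add: fps_X_mult_one_minus_exp_div_X[symmetric] ac_simps)
  also have "\<dots> = (fps_exp (1/2) - fps_exp (-1/2)) * tau_fps"
    by (simp add: algebra_simps fps_exp_add_mult[symmetric])
  also have "\<dots> = fps_X * two_sinh_half_div_X * tau_fps" by (simp only: fps_X_mult_two_sinh_half_div_X)
  also have "\<dots> = fps_X * 1"
    by (simp only: mult.assoc mult.commute[of two_sinh_half_div_X] tau_fps_mult_two_sinh_half_div_X)
  finally show ?thesis by (simp add: fps_X_neq_zero)
qed

lemma tau_exp_convolution:
  "(\<Sum>i=0..s. (-1) ^ i / fact (i + 1) * fps_nth (tau_fps * fps_exp (1/2)) (s - i))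
    = (if s = 0 then 1 else (0::real))"
  using arg_cong[OF one_minus_exp_div_X_mult_tau_exp, of "\<lambda>f. fps_nth f s"]
  by (simp add: fps_mult_nth one_minus_exp_div_X_def)

section \<open>The Vandermonde system\<close>

lemma vander_carrier: "vander Mm Mp \<in> carrier_mat (Mdeg Mm Mp + 1) (Mdeg Mm Mp + 1)"
  by (simp add: vander_def)

lemma det_vander_nonzero:
  assumes "Mm + Mp \<ge> 0"
  shows "det (vander Mm Mp) \<noteq> 0"
proof
  let ?n = "Mdeg Mm Mp + 1"
  assume "det (vander Mm Mp) = 0"
  then obtain v where v: "v \<in> carrier_vec ?n" "v \<noteq> 0\<^sub>v ?n" "vander Mm Mp *\<^sub>v v = 0\<^sub>v ?n"
    using det_0_iff_vec_prod_zero_field[OF vander_carrier] by blast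
  \<comment> \<open>a kernel vector holds the coefficients of a polynomial of degree \<open>\<le> M\<close> with \<open>M + 1\<close> roots\<close>
  define p :: "real poly" where "p = (\<Sum>j<?n. monom (v $ j) j)"
  have coeff_p: "coeff p j = (if j < ?n then v $ j else 0)" for j
    by (simp add: p_def coeff_sum)
  have roots: "poly p (real_of_int (int i - Mm)) = 0" if "i < ?n" for i
  proof -
    have "poly p (real_of_int (int i - Mm)) = (vander Mm Mp *\<^sub>v v) $ i"
      using that v(1)
      by (simp add: p_def poly_sum poly_monom vander_def scalar_prod_def lessThan_atLeast0 mult.commute)
    then show ?thesis using v(3) that by simp
  qed
  have "p = 0"
  proof (rule ccontr)
    assume "p \<noteq> 0"
    have "?n = card ((\<lambda>i. real_of_int (int i - Mm)) ` {..<?n})"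
      by (subst card_image) (auto simp: inj_on_def)
    also have "\<dots> \<le> card {x. poly p x = 0}"
      using roots by (intro card_mono poly_roots_finite[OF \<open>p \<noteq> 0\<close>]) auto
    also have "\<dots> \<le> degree p" by (rule card_poly_roots_bound[OF \<open>p \<noteq> 0\<close>])
    also have "\<dots> \<le> Mdeg Mm Mp" by (rule degree_le) (simp add: coeff_p)
    finally show False by simp
  qed
  have "v = 0\<^sub>v ?n"
  proof (rule eq_vecI)
    fix i assume "i < dim_vec (0\<^sub>v ?n :: real vec)"
    then show "v $ i = 0\<^sub>v ?n $ i" using coeff_p[of i] \<open>p = 0\<close> by simp
  qed (use v(1) in simp)
  with v(2) show False by simp
qed

lemma vander_inv_mult_vander:
  assumes "Mm + Mp \<ge> 0"
  shows "vander_inv Mm Mp * vander Mm Mp = 1\<^sub>m (Mdeg Mm Mp + 1)"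
    and "vander_inv Mm Mp \<in> carrier_mat (Mdeg Mm Mp + 1) (Mdeg Mm Mp + 1)"
proof -
  let ?n = "Mdeg Mm Mp + 1"
  have "vander Mm Mp \<in> Units (ring_mat TYPE(real) ?n ())"
    by (rule det_non_zero_imp_unit[OF vander_carrier det_vander_nonzero[OF assms]])
  then obtain B where B: "mat_inverse (vander Mm Mp) = Some B"
    using mat_inverse(1)[OF vander_carrier] by fastforce
  then show "vander_inv Mm Mp * vander Mm Mp = 1\<^sub>m ?n" "vander_inv Mm Mp \<in> carrier_mat ?n ?n"
    using mat_inverse(2)[OF vander_carrier B] by (simp_all add: vander_inv_def)
qed

lemma nu_kronecker:
  assumes "Mm + Mp \<ge> 0" "m \<le> Mdeg Mm Mp" "j \<le> Mdeg Mm Mp"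
  shows "nu Mm Mp m j = (if m = j then 1 else 0)"
proof -
  let ?n = "Mdeg Mm Mp + 1"
  let ?B = "vander_inv Mm Mp"
  have shift: "bij_betw (\<lambda>l. nat (l + Mm)) {-Mm..Mp} {0..<?n}"
    by (rule bij_betw_byWitness[where f' = "\<lambda>i. int i - Mm"]) (use assms(1) in \<open>auto simp: Mdeg_def\<close>)
  have "nu Mm Mp m j = (\<Sum>l=-Mm..Mp. ?B $$ (m, nat (l + Mm)) * real_of_int (int (nat (l + Mm)) - Mm) ^ j)"
    unfolding nu_def vinv_def by (rule sum.cong) auto
  also have "\<dots> = (\<Sum>i=0..<?n. ?B $$ (m, i) * real_of_int (int i - Mm) ^ j)"
    by (rule sum.reindex_bij_betw[OF shift])
  also have "\<dots> = (?B * vander Mm Mp) $$ (m, j)"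
    using assms vander_inv_mult_vander(2)[OF assms(1)] by (simp add: vander_def scalar_prod_def)
  also have "\<dots> = (if m = j then 1 else 0)"
    using vander_inv_mult_vander(1)[OF assms(1)] assms by simp
  finally show ?thesis .
qed

section \<open>Moments of the reconstruction weights\<close>

definition stencil_moment :: "int \<Rightarrow> int \<Rightarrow> nat \<Rightarrow> real" where
  "stencil_moment Mm Mp j = (\<Sum>l=-Mm..Mp. acoef Mm Mp l * real_of_int l ^ j)"

lemma stencil_moment_nu:
  "stencil_moment Mm Mp j = (\<Sum>m=0..Mdeg Mm Mp. (\<Sum>k=0..(Mdeg Mm Mp - m) div 2.
       tau k * fact (m + 2 * k) / fact m * nu Mm Mp (m + 2 * k) j) * (1/2) ^ m)"
proof -
  let ?M = "Mdeg Mm Mp"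
  let ?w = "\<lambda>m k. tau k * fact (m + 2 * k) / fact m * (1/2) ^ m"
  have "stencil_moment Mm Mp j
      = (\<Sum>l=-Mm..Mp. \<Sum>m=0..?M. \<Sum>k=0..(?M - m) div 2. ?w m k * (vinv Mm Mp (m + 2 * k) l * real_of_int l ^ j))"
    unfolding stencil_moment_def acoef_def by (simp add: sum_distrib_left sum_distrib_right mult_ac)
  also have "\<dots> = (\<Sum>m=0..?M. \<Sum>k=0..(?M - m) div 2. \<Sum>l=-Mm..Mp.
      ?w m k * (vinv Mm Mp (m + 2 * k) l * real_of_int l ^ j))"
    by (subst sum.swap) (simp only: sum.swap[of _ "{-Mm..Mp}"])
  also have "\<dots> = (\<Sum>m=0..?M.
      (\<Sum>k=0..(?M - m) div 2. tau k * fact (m + 2 * k) / fact m * nu Mm Mp (m + 2 * k) j) * (1/2) ^ m)"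
    by (simp add: nu_def sum_distrib_left sum_distrib_right mult_ac)
  finally show ?thesis .
qed

lemma stencil_moment_low:
  assumes "Mm + Mp \<ge> 0" "j \<le> Mdeg Mm Mp"
  shows "stencil_moment Mm Mp j = fact j * fps_nth (tau_fps * fps_exp (1/2)) j"
proof -
  let ?M = "Mdeg Mm Mp"
  let ?F = "\<lambda>m. if m \<le> j \<and> even (j - m) then tau ((j - m) div 2) * fact j / fact m * (1/2::real) ^ m else 0"
  have inner: "(\<Sum>k=0..(?M - m) div 2. tau k * fact (m + 2 * k) / fact m * nu Mm Mp (m + 2 * k) j)
      * (1/2) ^ m = ?F m"
    if "m \<le> ?M" for m
  proof -
    \<comment> \<open>by \<open>nu_kronecker\<close> only \<open>k = (j - m) div 2\<close> survives\<close>
    have "(\<Sum>k=0..(?M - m) div 2. tau k * fact (m + 2 * k) / fact m * nu Mm Mp (m + 2 * k) j)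
        = (\<Sum>k=0..(?M - m) div 2. if k = (j - m) div 2 \<and> m \<le> j \<and> even (j - m) then tau k * fact j / fact m else 0)"
      using that assms by (intro sum.cong refl) (auto simp: nu_kronecker; presburger)
    also have "\<dots> = (if m \<le> j \<and> even (j - m) then tau ((j - m) div 2) * fact j / fact m else 0)"
    proof (cases "m \<le> j \<and> even (j - m)")
      case False
      then show ?thesis by (simp only: False if_False simp_thms sum.neutral_const)
    next
      case True
      then have "(j - m) div 2 \<in> {0..(?M - m) div 2}" using assms(2) by (simp add: div_le_mono)
      with True show ?thesis by (simp add: sum.delta)
    qed
    finally have inner_sum: "(\<Sum>k=0..(?M - m) div 2. tau k * fact (m + 2 * k) / fact m * nu Mm Mp (m + 2 * k) j)
        = (if m \<le> j \<and> even (j - m) then tau ((j - m) div 2) * fact j / fact m else 0)" .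
    show ?thesis
      unfolding inner_sum by (simp only: if_distrib[of "\<lambda>x. x * (1/2::real) ^ m"] mult_zero_left)
  qed
  have "stencil_moment Mm Mp j = (\<Sum>m=0..?M. ?F m)"
    unfolding stencil_moment_nu by (rule sum.cong[OF refl], rule inner) simp
  also have "\<dots> = (\<Sum>m=0..j. ?F m)"
    by (rule sum.mono_neutral_right) (use assms(2) in auto)
  also have "\<dots> = (\<Sum>i=0..j. ?F (j - i))"
    using sum.atLeastAtMost_rev[of ?F 0 j] by (simp only: add_0_right)
  also have "\<dots> = (\<Sum>i=0..j. if even i
      then tau (i div 2) * fact j / fact (j - 2 * (i div 2)) * (1/2) ^ (j - 2 * (i div 2)) else 0)"
    by (rule sum.cong) (auto elim!: evenE)
  also have "\<dots> = (\<Sum>k=0..j div 2. tau k * fact j / fact (j - 2 * k) * (1/2) ^ (j - 2 * k))"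
    by (rule sum_even_indices)
  also have "\<dots> = fact j * fps_nth (tau_fps * fps_exp (1/2)) j"
    unfolding fps_nth_tau_exp sum_distrib_left by (rule sum.cong) auto
  finally show ?thesis .
qed

definition cell_moment :: "int \<Rightarrow> int \<Rightarrow> nat \<Rightarrow> real" where
  "cell_moment Mm Mp s = (\<Sum>i=0..s. (-1) ^ i / fact (i + 1) * (stencil_moment Mm Mp (s - i) / fact (s - i)))"

lemma mu_half: "mu Mm Mp r (1/2) = stencil_moment Mm Mp r / fact r - fps_nth (tau_fps * fps_exp (1/2)) r"
proof -
  have "(\<Sum>k = 0..r div 2. - tau k / fact (r - 2 * k) * (1/2::real) ^ (r - 2 * k))
      = - fps_nth (tau_fps * fps_exp (1/2)) r"
    unfolding fps_nth_tau_exp sum_negf[symmetric] by (rule sum.cong) auto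
  moreover have "(\<Sum>m = 0..Mdeg Mm Mp. (\<Sum>k = 0..(Mdeg Mm Mp - m) div 2.
        tau k * nu Mm Mp (m + 2 * k) r * fact (m + 2 * k) / (fact r * fact m)) * (1/2::real) ^ m)
      = stencil_moment Mm Mp r / fact r"
    unfolding stencil_moment_nu sum_divide_distrib
    by (rule sum.cong[OF refl]) (simp add: sum_divide_distrib sum_distrib_right field_simps)
  ultimately show ?thesis unfolding mu_def by simp
qed

lemma cell_moment_low:
  assumes "Mm + Mp \<ge> 0" "s \<le> Mdeg Mm Mp"
  shows "cell_moment Mm Mp s = (if s = 0 then 1 else 0)"
proof -
  have "cell_moment Mm Mp s = (\<Sum>i=0..s. (-1) ^ i / fact (i + 1) * fps_nth (tau_fps * fps_exp (1/2)) (s - i))"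
    unfolding cell_moment_def using assms by (intro sum.cong refl) (simp add: stencil_moment_low)
  then show ?thesis by (simp only: tau_exp_convolution)
qed

lemma cell_moment_high:
  assumes "Mm + Mp \<ge> 0" "Mdeg Mm Mp < s"
  shows "cell_moment Mm Mp s = Lambda Mm Mp s"
proof -
  let ?M = "Mdeg Mm Mp"
  let ?G = "fps_nth (tau_fps * fps_exp (1/2))"
  let ?g = "\<lambda>i. (-1) ^ i / fact (i + 1) * (stencil_moment Mm Mp (s - i) / fact (s - i) - ?G (s - i))"
  \<comment> \<open>subtracting the vanishing convolution leaves exactly the terms with \<open>s - i > M\<close>\<close>
  have "cell_moment Mm Mp s = (\<Sum>i=0..s. (-1) ^ i / fact (i + 1) * ?G (s - i)) + (\<Sum>i=0..s. ?g i)"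
    unfolding cell_moment_def sum.distrib[symmetric] by (rule sum.cong) (auto simp: algebra_simps)
  also have "(\<Sum>i=0..s. (-1) ^ i / fact (i + 1) * ?G (s - i)) = 0"
    using assms(2) tau_exp_convolution[of s] by simp
  also have "(\<Sum>i=0..s. ?g i) = (\<Sum>i=0..s - ?M - 1. ?g i)"
    by (rule sum.mono_neutral_right) (auto simp: stencil_moment_low[OF assms(1)])
  also have "\<dots> = Lambda Mm Mp s"
    unfolding Lambda_def by (rule sum.cong) (auto simp: mu_half)
  finally show ?thesis by simp
qed

lemma power_Suc_diff_expansion:
  fixes x :: real
  shows "(x ^ (s + 1) - (x - 1) ^ (s + 1)) / (real s + 1)
       = (\<Sum>i=0..s. (-1) ^ i * fact s / (fact (i + 1) * fact (s - i)) * x ^ (s - i))"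
proof -
  let ?t = "\<lambda>k. of_nat (Suc s choose k) * x ^ k * (-1::real) ^ (Suc s - k)"
  have "(x - 1) ^ (s + 1) = (\<Sum>k\<le>s. ?t k) + x ^ (s + 1)"
    using binomial_ring[of x "-1" "Suc s"] by (simp add: sum.atMost_Suc)
  then have "x ^ (s + 1) - (x - 1) ^ (s + 1) = (\<Sum>k=0..s. of_nat (Suc s choose k) * x ^ k * (-1) ^ (s - k))"
    unfolding atMost_atLeast0 by (simp add: sum_negf[symmetric] Suc_diff_le)
  also have "\<dots> = (\<Sum>i=0..s. of_nat (Suc s choose (s - i)) * x ^ (s - i) * (-1) ^ i)"
    by (subst sum.atLeastAtMost_rev[of _ 0 s]) (intro sum.cong refl, simp)
  finally have diff: "x ^ (s + 1) - (x - 1) ^ (s + 1)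
      = (\<Sum>i=0..s. of_nat (Suc s choose (s - i)) * x ^ (s - i) * (-1) ^ i)" .
  show ?thesis
    unfolding diff sum_divide_distrib
  proof (rule sum.cong[OF refl])
    fix i assume "i \<in> {0..s}"
    then have "(of_nat (Suc s choose (s - i)) :: real) = (real s + 1) * fact s / (fact (s - i) * fact (i + 1))"
      using binomial_fact[of "s - i" "Suc s", where 'a = real]
      by (simp add: Suc_diff_le fact_Suc[of s] add.commute)
    then have C: "(of_nat (Suc s choose (s - i)) :: real) / (real s + 1)
        = fact s / (fact (i + 1) * fact (s - i))"
      by (simp del: fact_Suc add: mult.commute)
    have "of_nat (Suc s choose (s - i)) * x ^ (s - i) * (-1) ^ i / (real s + 1)
        = of_nat (Suc s choose (s - i)) / (real s + 1) * ((-1) ^ i * x ^ (s - i))"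
      by (simp add: field_simps)
    then show "of_nat (Suc s choose (s - i)) * x ^ (s - i) * (-1) ^ i / (real s + 1)
        = (-1) ^ i * fact s / (fact (i + 1) * fact (s - i)) * x ^ (s - i)"
      unfolding C by simp
  qed
qed

lemma stencil_cell_power:
  "(\<Sum>l=-Mm..Mp. acoef Mm Mp l * ((real_of_int l ^ (s + 1) - (real_of_int l - 1) ^ (s + 1)) / (real s + 1)))
    = fact s * cell_moment Mm Mp s"
proof -
  let ?c = "\<lambda>i. (-1) ^ i * fact s / (fact (i + 1) * fact (s - i)) :: real"
  have "(\<Sum>l=-Mm..Mp. acoef Mm Mp l * ((real_of_int l ^ (s + 1) - (real_of_int l - 1) ^ (s + 1)) / (real s + 1)))
      = (\<Sum>l=-Mm..Mp. \<Sum>i=0..s. ?c i * (acoef Mm Mp l * real_of_int l ^ (s - i)))"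
    unfolding power_Suc_diff_expansion sum_distrib_left by (intro sum.cong refl) (simp add: mult_ac)
  also have "\<dots> = (\<Sum>i=0..s. ?c i * stencil_moment Mm Mp (s - i))"
    unfolding stencil_moment_def sum_distrib_left by (rule sum.swap)
  also have "\<dots> = fact s * cell_moment Mm Mp s"
    unfolding cell_moment_def sum_distrib_left by (rule sum.cong) (simp_all add: field_simps)
  finally show ?thesis .
qed

section \<open>Cell averages of polynomials\<close>

lemma integral_shifted_power:
  fixes a b c :: real
  assumes "a \<le> b"
  shows "integral {a..b} (\<lambda>x. (x - c) ^ s) = ((b - c) ^ (s + 1) - (a - c) ^ (s + 1)) / (real s + 1)"
proof -
  have "((\<lambda>x. (x - c) ^ s) has_integral
      (b - c) ^ (s + 1) / (real s + 1) - (a - c) ^ (s + 1) / (real s + 1)) {a..b}"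
  proof (rule fundamental_theorem_of_calculus[OF assms])
    fix x
    have "((\<lambda>y. y - c) has_real_derivative 1) (at x within {a..b})"
      by (auto intro!: derivative_eq_intros)
    from DERIV_cdivide[OF DERIV_power_Suc[OF this, where n = s], where c = "real s + 1"]
    have "((\<lambda>y. (y - c) ^ (s + 1) / (real s + 1)) has_real_derivative (x - c) ^ s) (at x within {a..b})"
      by (simp add: add.commute)
    then show "((\<lambda>y. (y - c) ^ (s + 1) / (real s + 1)) has_vector_derivative (x - c) ^ s) (at x within {a..b})"
      by (simp add: has_real_derivative_iff_has_vector_derivative)
  qed
  then show ?thesis by (simp add: integral_unique diff_divide_distrib)
qed

lemma cell_avg_shifted_power:
  assumes "dx > 0"
  shows "cell_avg dx (\<lambda>x. (x - c) ^ s) (c - dx/2 + real_of_int l * dx)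
       = dx ^ s * ((real_of_int l ^ (s + 1) - (real_of_int l - 1) ^ (s + 1)) / (real s + 1))"
proof -
  have "(real_of_int l * dx) ^ (s + 1) - ((real_of_int l - 1) * dx) ^ (s + 1)
      = dx * dx ^ s * (real_of_int l ^ (s + 1) - (real_of_int l - 1) ^ (s + 1))"
    by (simp only: power_mult_distrib power_Suc2 Suc_eq_plus1[symmetric]) (simp add: algebra_simps)
  moreover have "cell_avg dx (\<lambda>x. (x - c) ^ s) (c - dx/2 + real_of_int l * dx)
      = (1 / dx) * (((real_of_int l * dx) ^ (s + 1) - ((real_of_int l - 1) * dx) ^ (s + 1)) / (real s + 1))"
    unfolding cell_avg_def using assms by (subst integral_shifted_power) (simp_all add: algebra_simps)
  ultimately show ?thesis using assms by simp
qed

lemma cell_avg_sum_powers: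
  "cell_avg dx (\<lambda>x. \<Sum>s\<le>K. b s * (x - c) ^ s) y = (\<Sum>s\<le>K. b s * cell_avg dx (\<lambda>x. (x - c) ^ s) y)"
proof -
  let ?J = "{y - dx/2..y + dx/2}"
  have "integral ?J (\<lambda>x. \<Sum>s\<le>K. b s * (x - c) ^ s) = (\<Sum>s\<le>K. integral ?J (\<lambda>x. b s * (x - c) ^ s))"
    by (rule integral_sum) (auto intro!: integrable_continuous_interval continuous_intros)
  then show ?thesis by (simp add: cell_avg_def sum_distrib_left mult_ac)
qed

lemma stencil_cell_avg_poly:
  assumes "Mm + Mp \<ge> 0" "Mdeg Mm Mp \<le> N" "dx > 0"
  shows "(\<Sum>l=-Mm..Mp. acoef Mm Mp l * cell_avg dx (\<lambda>x. \<Sum>s\<le>N. b s * (x - c) ^ s) (c - dx/2 + real_of_int l * dx))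
       = b 0 + (\<Sum>s = Mdeg Mm Mp + 1..N. Lambda Mm Mp s * dx ^ s * (fact s * b s))"
proof -
  let ?M = "Mdeg Mm Mp"
  let ?t = "\<lambda>s. b s * dx ^ s * (fact s * cell_moment Mm Mp s)"
  have "(\<Sum>l=-Mm..Mp. acoef Mm Mp l * cell_avg dx (\<lambda>x. \<Sum>s\<le>N. b s * (x - c) ^ s) (c - dx/2 + real_of_int l * dx))
      = (\<Sum>l=-Mm..Mp. \<Sum>s\<le>N. b s * dx ^ s * (acoef Mm Mp l
          * ((real_of_int l ^ (s + 1) - (real_of_int l - 1) ^ (s + 1)) / (real s + 1))))"
    unfolding cell_avg_sum_powers cell_avg_shifted_power[OF assms(3)] sum_distrib_left
    by (intro sum.cong refl) (simp add: mult_ac)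
  also have "\<dots> = (\<Sum>s\<le>N. ?t s)"
    by (subst sum.swap) (simp only: sum_distrib_left[symmetric] stencil_cell_power)
  also have "\<dots> = (\<Sum>s\<le>?M. ?t s) + (\<Sum>s = ?M + 1..N. ?t s)"
    using assms(2) by (subst sum.union_disjoint[symmetric]) (auto intro!: sum.cong)
  also have "(\<Sum>s\<le>?M. ?t s) = (\<Sum>s\<le>?M. if s = 0 then b 0 else 0)"
    by (intro sum.cong refl) (simp add: cell_moment_low[OF assms(1)])
  also have "\<dots> = b 0" by simp
  also have "(\<Sum>s = ?M + 1..N. ?t s) = (\<Sum>s = ?M + 1..N. Lambda Mm Mp s * dx ^ s * (fact s * b s))"
    by (intro sum.cong refl) (simp add: cell_moment_high[OF assms(1)])
  finally show ?thesis .
qed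

lemma stencil_exact_poly:
  fixes p :: "real poly"
  assumes "Mm + Mp \<ge> 0" "dx > 0" "degree p \<le> Mdeg Mm Mp"
  shows "(\<Sum>l=-Mm..Mp. acoef Mm Mp l * cell_avg dx (poly p) (c - dx/2 + real_of_int l * dx)) = poly p c"
proof -
  define q where "q = pcompose p [:c, 1:]"
  have "poly p = (\<lambda>x. \<Sum>s\<le>Mdeg Mm Mp. coeff q s * (x - c) ^ s)"
  proof
    fix x
    have "poly p x = poly q (x - c)" by (simp add: q_def poly_pcompose)
    also have "\<dots> = poly (\<Sum>s\<le>Mdeg Mm Mp. monom (coeff q s) s) (x - c)"
      using assms(3) by (simp add: q_def degree_pcompose poly_as_sum_of_monoms')
    also have "\<dots> = (\<Sum>s\<le>Mdeg Mm Mp. coeff q s * (x - c) ^ s)"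
      by (simp add: poly_sum poly_monom)
    finally show "poly p x = (\<Sum>s\<le>Mdeg Mm Mp. coeff q s * (x - c) ^ s)" .
  qed
  moreover have "coeff q 0 = poly p c"
    by (simp add: q_def poly_pcompose poly_0_coeff_0[symmetric])
  ultimately show ?thesis
    using stencil_cell_avg_poly[OF assms(1) order_refl assms(2), of "coeff q" c] by simp
qed

section \<open>The error expansion\<close>

lemma taylor_remainder_bound:
  fixes h :: "real \<Rightarrow> real"
  assumes "open I" "c \<in> I"
    and h_deriv: "\<forall>k\<le>N. \<forall>x\<in>I. ((deriv ^^ k) h has_real_derivative (deriv ^^ Suc k) h x) (at x)"
    and h_cont: "continuous_on I ((deriv ^^ Suc N) h)"
  obtains e C where "e > 0" "C \<ge> 0" "cball c e \<subseteq> I"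
    "\<And>x. \<bar>x - c\<bar> \<le> e \<Longrightarrow> \<bar>h x - (\<Sum>s\<le>N. (deriv ^^ s) h c / fact s * (x - c) ^ s)\<bar> \<le> C * \<bar>x - c\<bar> ^ (N + 1)"
proof -
  obtain e where e: "e > 0" "cball c e \<subseteq> I" using open_contains_cball assms(1,2) by blast
  have "compact ((deriv ^^ Suc N) h ` cball c e)"
    by (rule compact_continuous_image[OF continuous_on_subset[OF h_cont e(2)] compact_cball])
  then obtain B where "\<forall>y \<in> (deriv ^^ Suc N) h ` cball c e. norm y \<le> B"
    using compact_imp_bounded bounded_iff by metis
  then have B: "\<bar>(deriv ^^ Suc N) h t\<bar> \<le> B" if "t \<in> cball c e" for t
    using that by simp
  have "0 \<le> B" using B[of c] e(1) by simp
  moreover have "\<bar>h x - (\<Sum>s\<le>N. (deriv ^^ s) h c / fact s * (x - c) ^ s)\<bar> \<le> B / fact (Suc N) * \<bar>x - c\<bar> ^ (N + 1)"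
    if x: "\<bar>x - c\<bar> \<le> e" for x
  proof (cases "x = c")
    case True
    have "(\<Sum>s\<le>N. (deriv ^^ s) h c / fact s * (c - c) ^ s) = (\<Sum>s\<le>N. if s = 0 then h c else 0)"
      by (intro sum.cong refl) auto
    then show ?thesis using True by simp
  next
    case False
    have "\<forall>m t. m < Suc N \<and> c - e \<le> t \<and> t \<le> c + e
        \<longrightarrow> ((deriv ^^ m) h has_real_derivative (deriv ^^ Suc m) h t) (at t)"
    proof (intro allI impI)
      fix m t assume "m < Suc N \<and> c - e \<le> t \<and> t \<le> c + e"
      moreover from this have "t \<in> I" using e(2) by (auto simp: dist_real_def subset_iff)
      ultimately show "((deriv ^^ m) h has_real_derivative (deriv ^^ Suc m) h t) (at t)"
        using h_deriv by simp
    qed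
    then obtain t where t: "if x < c then x < t \<and> t < c else c < t \<and> t < x"
      and taylor: "h x = (\<Sum>m<Suc N. (deriv ^^ m) h c / fact m * (x - c) ^ m)
                   + (deriv ^^ Suc N) h t / fact (Suc N) * (x - c) ^ Suc N"
      using Taylor[of "Suc N" "\<lambda>m. (deriv ^^ m) h" h "c - e" "c + e" c x] x e(1) False
      by (auto simp: abs_le_iff)
    have "t \<in> cball c e" using t x by (auto simp: dist_real_def split: if_splits)
    then have "\<bar>(deriv ^^ Suc N) h t\<bar> / fact (Suc N) * \<bar>x - c\<bar> ^ Suc N \<le> B / fact (Suc N) * \<bar>x - c\<bar> ^ Suc N"
      by (intro mult_right_mono divide_right_mono B) auto
    then show ?thesis using taylor by (simp add: lessThan_Suc_atMost abs_mult power_abs)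
  qed
  ultimately show ?thesis using that[of e "B / fact (Suc N)"] e by simp
qed
lemma cell_avg_diff:
  assumes "f integrable_on {y - dx/2..y + dx/2}" "g integrable_on {y - dx/2..y + dx/2}"
  shows "cell_avg dx (\<lambda>x. f x - g x) y = cell_avg dx f y - cell_avg dx g y"
  using assms by (simp add: cell_avg_def integral_diff right_diff_distrib)

lemma cell_avg_abs_le:
  assumes "dx > 0" "continuous_on {y - dx/2..y + dx/2} f" "\<And>x. x \<in> {y - dx/2..y + dx/2} \<Longrightarrow> \<bar>f x\<bar> \<le> B"
  shows "\<bar>cell_avg dx f y\<bar> \<le> B"
proof -
  have "\<bar>integral {y - dx/2..y + dx/2} f\<bar> \<le> B * dx"
    using integral_bound[of "y - dx/2" "y + dx/2" f B] assms by simp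
  then show ?thesis using assms(1) by (simp add: cell_avg_def abs_mult field_simps)
qed

lemma power_bigo_at_right_0:
  assumes "m \<le> n"
  shows "(\<lambda>x::real. a * x ^ n) \<in> O[at_right 0](\<lambda>x. x ^ m)"
proof (rule bigoI[where c = "\<bar>a\<bar>"])
  have "\<forall>\<^sub>F x in at_right (0::real). x \<in> {0<..<1}" by (rule eventually_at_right_real) simp
  then show "\<forall>\<^sub>F x in at_right 0. norm (a * x ^ n) \<le> \<bar>a\<bar> * norm (x ^ m)"
    by eventually_elim (auto simp: abs_mult intro!: mult_left_mono power_decreasing assms)
qed

lemma stencil_cell_subset:
  assumes "dx > 0" "l \<in> {-Mm..Mp}"
  shows "{c - dx/2 + real_of_int l * dx - dx/2..c - dx/2 + real_of_int l * dx + dx/2}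
    \<subseteq> {c - (real_of_int (\<bar>Mm\<bar> + \<bar>Mp\<bar>) + 1) * dx..c + (real_of_int (\<bar>Mm\<bar> + \<bar>Mp\<bar>) + 1) * dx}"
proof -
  have "\<bar>real_of_int l\<bar> + 1 \<le> real_of_int (\<bar>Mm\<bar> + \<bar>Mp\<bar>) + 1" using assms(2) by auto
  then have "(\<bar>real_of_int l\<bar> + 1) * dx \<le> (real_of_int (\<bar>Mm\<bar> + \<bar>Mp\<bar>) + 1) * dx"
    using assms(1) by (intro mult_right_mono) auto
  moreover have "real_of_int l * dx \<le> \<bar>real_of_int l\<bar> * dx" "- real_of_int l * dx \<le> \<bar>real_of_int l\<bar> * dx"
    using assms(1) by (intro mult_right_mono; simp)+
  ultimately show ?thesis by (auto simp: distrib_right)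
qed

lemma stencil_cell_avg_bigo:
  fixes R :: "real \<Rightarrow> real" and w :: "int \<Rightarrow> real"
  assumes "e > 0" "C \<ge> 0" "continuous_on {c - e..c + e} R"
    and R_bound: "\<And>x. \<bar>x - c\<bar> \<le> e \<Longrightarrow> \<bar>R x\<bar> \<le> C * \<bar>x - c\<bar> ^ n"
  shows "(\<lambda>dx. \<Sum>l=-Mm..Mp. w l * cell_avg dx R (c - dx/2 + real_of_int l * dx)) \<in> O[at_right 0](\<lambda>dx. dx ^ n)"
proof (rule big_sum_in_bigo)
  define K where "K = real_of_int (\<bar>Mm\<bar> + \<bar>Mp\<bar>) + 1"
  have "K > 0" by (simp add: K_def add_nonneg_pos)
  then have "\<forall>\<^sub>F dx in at_right 0. dx \<in> {0<..<e / K}"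
    using assms(1) by (intro eventually_at_right_real) simp
  then have small: "\<forall>\<^sub>F dx in at_right 0. dx > 0 \<and> K * dx < e"
    by eventually_elim (use \<open>K > 0\<close> in \<open>auto simp: field_simps\<close>)
  fix l assume l: "l \<in> {-Mm..Mp}"
  have cell_bound: "\<bar>cell_avg dx R (c - dx/2 + real_of_int l * dx)\<bar> \<le> C * K ^ n * dx ^ n"
    if "dx > 0" "K * dx < e" for dx
  proof (rule cell_avg_abs_le[OF that(1)])
    let ?J = "{c - dx/2 + real_of_int l * dx - dx/2..c - dx/2 + real_of_int l * dx + dx/2}"
    have near: "?J \<subseteq> {c - K * dx..c + K * dx}"
      unfolding K_def by (rule stencil_cell_subset[OF that(1) l])
    have "?J \<subseteq> {c - e..c + e}" using near that(2) by auto
    then show "continuous_on ?J R" by (rule continuous_on_subset[OF assms(3)])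
    fix x assume "x \<in> ?J"
    then have x: "\<bar>x - c\<bar> \<le> K * dx" using near by (auto simp: abs_le_iff)
    then have "\<bar>R x\<bar> \<le> C * \<bar>x - c\<bar> ^ n" using that(2) by (intro R_bound) linarith
    also have "\<dots> \<le> C * (K * dx) ^ n" using x assms(2) by (intro mult_left_mono power_mono) auto
    finally show "\<bar>R x\<bar> \<le> C * K ^ n * dx ^ n" by (simp add: power_mult_distrib mult_ac)
  qed
  show "(\<lambda>dx. w l * cell_avg dx R (c - dx/2 + real_of_int l * dx)) \<in> O[at_right 0](\<lambda>dx. dx ^ n)"
  proof (rule bigoI[where c = "\<bar>w l\<bar> * (C * K ^ n)"])
    show "\<forall>\<^sub>F dx in at_right 0. norm (w l * cell_avg dx R (c - dx/2 + real_of_int l * dx))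
        \<le> \<bar>w l\<bar> * (C * K ^ n) * norm (dx ^ n)"
      using small
    proof eventually_elim
      case (elim dx)
      then have "\<bar>w l\<bar> * \<bar>cell_avg dx R (c - dx/2 + real_of_int l * dx)\<bar> \<le> \<bar>w l\<bar> * (C * K ^ n * dx ^ n)"
        using cell_bound by (intro mult_left_mono) auto
      then show ?case using elim by (simp add: abs_mult mult_ac)
    qed
  qed
qed

lemma stencil_expansion:
  fixes h :: "real \<Rightarrow> real"
  assumes "Mm + Mp \<ge> 0" "Mdeg Mm Mp \<le> N" "open I" "c \<in> I"
    and h_deriv: "\<forall>k\<le>N. \<forall>x\<in>I. ((deriv ^^ k) h has_real_derivative (deriv ^^ Suc k) h x) (at x)"
    and h_cont: "continuous_on I ((deriv ^^ Suc N) h)"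
  shows "(\<lambda>dx. (\<Sum>l=-Mm..Mp. acoef Mm Mp l * cell_avg dx h (c - dx/2 + real_of_int l * dx)) - h c
           - (\<Sum>s = Mdeg Mm Mp + 1..N. Lambda Mm Mp s * dx ^ s * (deriv ^^ s) h c))
       \<in> O[at_right 0](\<lambda>dx. dx ^ (N + 1))"
proof -
  define T where "T x = (\<Sum>s\<le>N. (deriv ^^ s) h c / fact s * (x - c) ^ s)" for x
  define K where "K = real_of_int (\<bar>Mm\<bar> + \<bar>Mp\<bar>) + 1"
  obtain e C where e: "e > 0" "C \<ge> 0" "{c - e..c + e} \<subseteq> I"
    and remainder: "\<And>x. \<bar>x - c\<bar> \<le> e \<Longrightarrow> \<bar>h x - T x\<bar> \<le> C * \<bar>x - c\<bar> ^ (N + 1)"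
    using taylor_remainder_bound[OF assms(3-6)] unfolding T_def cball_eq_atLeastAtMost by blast
  have "continuous_on I h"
  proof (intro continuous_at_imp_continuous_on ballI)
    fix x assume "x \<in> I"
    then have "((deriv ^^ 0) h has_real_derivative (deriv ^^ Suc 0) h x) (at x)" using h_deriv by blast
    then show "isCont h x" by (auto intro: DERIV_isCont)
  qed
  then have h_cont_e: "continuous_on {c - e..c + e} h" using e(3) by (rule continuous_on_subset)
  have T_cont: "continuous_on A T" for A unfolding T_def by (intro continuous_intros)
  have "K > 0" by (simp add: K_def add_nonneg_pos)
  then have "\<forall>\<^sub>F dx in at_right 0. dx \<in> {0<..<e / K}"
    using e(1) by (intro eventually_at_right_real) simp
  then have small: "\<forall>\<^sub>F dx in at_right 0. dx > 0 \<and> K * dx < e"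
    by eventually_elim (use \<open>K > 0\<close> in \<open>auto simp: field_simps\<close>)
  \<comment> \<open>the weights reproduce the expansion exactly on the Taylor polynomial; only \<open>h - T\<close> is left\<close>
  have "\<forall>\<^sub>F dx in at_right 0.
      (\<Sum>l=-Mm..Mp. acoef Mm Mp l * cell_avg dx h (c - dx/2 + real_of_int l * dx)) - h c
        - (\<Sum>s = Mdeg Mm Mp + 1..N. Lambda Mm Mp s * dx ^ s * (deriv ^^ s) h c)
      = (\<Sum>l=-Mm..Mp. acoef Mm Mp l * cell_avg dx (\<lambda>x. h x - T x) (c - dx/2 + real_of_int l * dx))"
    using small
  proof eventually_elim
    case (elim dx)
    have "cell_avg dx (\<lambda>x. h x - T x) (c - dx/2 + real_of_int l * dx)
        = cell_avg dx h (c - dx/2 + real_of_int l * dx) - cell_avg dx T (c - dx/2 + real_of_int l * dx)"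
      if "l \<in> {-Mm..Mp}" for l
    proof (rule cell_avg_diff)
      let ?J = "{c - dx/2 + real_of_int l * dx - dx/2..c - dx/2 + real_of_int l * dx + dx/2}"
      have "?J \<subseteq> {c - K * dx..c + K * dx}"
        unfolding K_def using elim that by (intro stencil_cell_subset) auto
      also have "\<dots> \<subseteq> {c - e..c + e}" using elim by auto
      finally have "?J \<subseteq> {c - e..c + e}" .
      then show "h integrable_on ?J"
        using continuous_on_subset[OF h_cont_e] by (blast intro: integrable_continuous_interval)
    qed (intro integrable_continuous_interval T_cont)
    moreover have "(\<Sum>l=-Mm..Mp. acoef Mm Mp l * cell_avg dx T (c - dx/2 + real_of_int l * dx))
        = h c + (\<Sum>s = Mdeg Mm Mp + 1..N. Lambda Mm Mp s * dx ^ s * (deriv ^^ s) h c)"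
      unfolding T_def[abs_def]
      using stencil_cell_avg_poly[OF assms(1,2), of dx "\<lambda>s. (deriv ^^ s) h c / fact s" c] elim by simp
    ultimately show ?case by (simp add: right_diff_distrib sum_subtractf)
  qed
  moreover have "(\<lambda>dx. \<Sum>l=-Mm..Mp. acoef Mm Mp l * cell_avg dx (\<lambda>x. h x - T x) (c - dx/2 + real_of_int l * dx))
      \<in> O[at_right 0](\<lambda>dx. dx ^ (N + 1))"
    by (rule stencil_cell_avg_bigo[OF e(1,2) continuous_on_diff[OF h_cont_e T_cont] remainder])
  ultimately show ?thesis by (subst landau_o.big.in_cong)
qed

theorem corollary2:
  fixes h :: "real \<Rightarrow> real" and I :: "real set" and c :: real
    and Mm Mp :: int and N :: nat
    and pf ph :: "real \<Rightarrow> real poly"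
  assumes M_nonneg: "Mm + Mp \<ge> 0"
    and N_ge: "N \<ge> Mdeg Mm Mp + 1"
    and I_open: "open I" and I_interval: "is_interval I" and c_in: "c \<in> I"
    and h_deriv: "\<forall>k\<le>N. \<forall>x\<in>I.
        ((deriv ^^ k) h has_real_derivative (deriv ^^ Suc k) h x) (at x)"
    and h_cont: "continuous_on I ((deriv ^^ Suc N) h)"
    and pf_deg: "\<forall>dx>0. degree (pf dx) \<le> Mdeg Mm Mp"
    and pf_interp: "\<forall>dx>0. \<forall>l\<in>{-Mm..Mp}.
        poly (pf dx) (c - dx / 2 + real_of_int l * dx) = cell_avg dx h (c - dx / 2 + real_of_int l * dx)"
    and ph_deg: "\<forall>dx>0. degree (ph dx) \<le> Mdeg Mm Mp"
    and ph_rec: "\<forall>dx>0. \<forall>x. poly (pf dx) x = cell_avg dx (poly (ph dx)) x"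
  shows "(\<forall>dx>0. poly (ph dx) c =
            (\<Sum>l = -Mm..Mp. acoef Mm Mp l * cell_avg dx h (c - dx / 2 + real_of_int l * dx)))
       \<and> (\<lambda>dx. poly (ph dx) c - h c
             - (\<Sum>s = Mdeg Mm Mp + 1..N. Lambda Mm Mp s * dx ^ s * (deriv ^^ s) h c))
           \<in> O[at_right 0](\<lambda>dx. dx ^ (N + 1))
       \<and> (\<lambda>dx. poly (ph dx) c - h c) \<in> O[at_right 0](\<lambda>dx. dx ^ (Mdeg Mm Mp + 1))"
proof -
  let ?S = "\<lambda>dx. \<Sum>s = Mdeg Mm Mp + 1..N. Lambda Mm Mp s * dx ^ s * (deriv ^^ s) h c"
  have MN: "Mdeg Mm Mp \<le> N" using N_ge by simp
  have reconstruction: "poly (ph dx) c =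
      (\<Sum>l = -Mm..Mp. acoef Mm Mp l * cell_avg dx h (c - dx / 2 + real_of_int l * dx))" if "dx > 0" for dx
  proof -
    have "poly (ph dx) c
        = (\<Sum>l = -Mm..Mp. acoef Mm Mp l * cell_avg dx (poly (ph dx)) (c - dx / 2 + real_of_int l * dx))"
      using stencil_exact_poly[OF M_nonneg that] ph_deg that by simp
    also have "\<dots> = (\<Sum>l = -Mm..Mp. acoef Mm Mp l * cell_avg dx h (c - dx / 2 + real_of_int l * dx))"
      using ph_rec pf_interp that by (intro sum.cong refl) simp
    finally show ?thesis .
  qed
  have expansion: "(\<lambda>dx. poly (ph dx) c - h c - ?S dx) \<in> O[at_right 0](\<lambda>dx. dx ^ (N + 1))"
    using stencil_expansion[OF M_nonneg MN I_open c_in h_deriv h_cont]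
    by (subst landau_o.big.in_cong[where g = "\<lambda>dx. (\<Sum>l = -Mm..Mp. acoef Mm Mp l
          * cell_avg dx h (c - dx / 2 + real_of_int l * dx)) - h c - ?S dx"])
      (auto intro: eventually_mono[OF eventually_at_right_less] simp: reconstruction)
  have "(\<lambda>dx. (poly (ph dx) c - h c - ?S dx) + ?S dx) \<in> O[at_right 0](\<lambda>dx. dx ^ (Mdeg Mm Mp + 1))"
  proof (rule sum_in_bigo)
    show "(\<lambda>dx. poly (ph dx) c - h c - ?S dx) \<in> O[at_right 0](\<lambda>dx. dx ^ (Mdeg Mm Mp + 1))"
      using expansion power_bigo_at_right_0[of "Mdeg Mm Mp + 1" "N + 1" 1] MN
      by (auto intro: landau_o.big_trans)
    show "?S \<in> O[at_right 0](\<lambda>dx. dx ^ (Mdeg Mm Mp + 1))"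
      using power_bigo_at_right_0[of "Mdeg Mm Mp + 1" _ "Lambda Mm Mp _ * (deriv ^^ _) h c"]
      by (intro big_sum_in_bigo) (simp add: mult_ac)
  qed
  then show ?thesis using reconstruction expansion by simp
qed

end
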